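(* Let $E/\mathbb{Q}$ be an elliptic curve with nonzero $j$-invariant and a rational point $P$ of order $3$. If $\widetilde E=E/\langle P\rangle$ has a rational point of order $3$, then there are relatively prime integers $a,b$, both perfect cubes, with $a>0$, such that $E$ and $\widetilde E$ are $\mathbb{Q}$-isomorphic to $E_{C_3}(a,b)$ and $\widetilde E_{C_3}(a,b)$, respectively.
   Context: For integers $a,b$, $E_{C_3}(a,b)$ is the curve $y^2+axy+a^2by=x^3$ over $\mathbb{Q}$ (with the point $(0,0)$ of order $3$), and $\widetilde E_{C_3}(a,b)$ is the curve $y^2+axy+a^2by=x^3-5a^3b\,x-a^4b(a+7b)$, which is a model of $E_{C_3}(a,b)/\langle(0,0)\rangle$. Known fact usable here: every elliptic curve $E/\mathbb{Q}$ with nonzero $j$-invariant and a rational point $P$ of order $3$ is $\mathbb{Q}$-isomorphic to $E_{C_3}(a,b)$ for some relatively prime integers $a>0$, $b$, with $E/\langle P\rangle\cong \widetilde E_{C_3}(a,b)$. *)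

theory Defs
  imports Complex_Main
begin

text \<open>Long Weierstrass equations over the rationals:
  W a1 a2 a3 a4 a6 is  y^2 + a1 x y + a3 y = x^3 + a2 x^2 + a4 x + a6.\<close>

datatype wcurve = W rat rat rat rat rat

fun wa1 :: "wcurve \<Rightarrow> rat" where "wa1 (W a1 a2 a3 a4 a6) = a1"
fun wa2 :: "wcurve \<Rightarrow> rat" where "wa2 (W a1 a2 a3 a4 a6) = a2"
fun wa3 :: "wcurve \<Rightarrow> rat" where "wa3 (W a1 a2 a3 a4 a6) = a3"
fun wa4 :: "wcurve \<Rightarrow> rat" where "wa4 (W a1 a2 a3 a4 a6) = a4"
fun wa6 :: "wcurve \<Rightarrow> rat" where "wa6 (W a1 a2 a3 a4 a6) = a6"

definition wb2 :: "wcurve \<Rightarrow> rat" where "wb2 E = wa1 E ^ 2 + 4 * wa2 E"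
definition wb4 :: "wcurve \<Rightarrow> rat" where "wb4 E = 2 * wa4 E + wa1 E * wa3 E"
definition wb6 :: "wcurve \<Rightarrow> rat" where "wb6 E = wa3 E ^ 2 + 4 * wa6 E"
definition wb8 :: "wcurve \<Rightarrow> rat" where
  "wb8 E = wa1 E ^ 2 * wa6 E + 4 * wa2 E * wa6 E - wa1 E * wa3 E * wa4 E
           + wa2 E * wa3 E ^ 2 - wa4 E ^ 2"
definition wc4 :: "wcurve \<Rightarrow> rat" where "wc4 E = wb2 E ^ 2 - 24 * wb4 E"
definition disc :: "wcurve \<Rightarrow> rat" where
  "disc E = - (wb2 E ^ 2) * wb8 E - 8 * wb4 E ^ 3 - 27 * wb6 E ^ 2
            + 9 * wb2 E * wb4 E * wb6 E"
definition j_inv :: "wcurve \<Rightarrow> rat" where "j_inv E = wc4 E ^ 3 / disc E"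

definition elliptic :: "wcurve \<Rightarrow> bool" where "elliptic E \<longleftrightarrow> disc E \<noteq> 0"

datatype pt = Inf | Aff rat rat

fun on_curve :: "wcurve \<Rightarrow> pt \<Rightarrow> bool" where
  "on_curve E Inf = True"
| "on_curve E (Aff x y) \<longleftrightarrow>
     y ^ 2 + wa1 E * x * y + wa3 E * y = x ^ 3 + wa2 E * x ^ 2 + wa4 E * x + wa6 E"

text \<open>Chord-and-tangent group law (Silverman, Algorithm III.2.3).\<close>
fun pt_neg :: "wcurve \<Rightarrow> pt \<Rightarrow> pt" where
  "pt_neg E Inf = Inf"
| "pt_neg E (Aff x y) = Aff x (- y - wa1 E * x - wa3 E)"

fun pt_add :: "wcurve \<Rightarrow> pt \<Rightarrow> pt \<Rightarrow> pt" where
  "pt_add E Inf Q = Q"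
| "pt_add E P Inf = P"
| "pt_add E (Aff x1 y1) (Aff x2 y2) =
     (if x1 = x2 \<and> y1 + y2 + wa1 E * x2 + wa3 E = 0 then Inf
      else
        let lam = (if x1 \<noteq> x2 then (y2 - y1) / (x2 - x1)
                   else (3 * x1 ^ 2 + 2 * wa2 E * x1 + wa4 E - wa1 E * y1)
                        / (2 * y1 + wa1 E * x1 + wa3 E));
            nu = (if x1 \<noteq> x2 then (y1 * x2 - y2 * x1) / (x2 - x1)
                  else (- (x1 ^ 3) + wa4 E * x1 + 2 * wa6 E - wa3 E * y1)
                       / (2 * y1 + wa1 E * x1 + wa3 E));
            x3 = lam ^ 2 + wa1 E * lam - wa2 E - x1 - x2;
            y3 = - (lam + wa1 E) * x3 - nu - wa3 E
        in Aff x3 y3)"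

text \<open>P is a rational point of order exactly 3 (3 is prime, so P \<noteq> O and 3P = O).\<close>
definition order3 :: "wcurve \<Rightarrow> pt \<Rightarrow> bool" where
  "order3 E P \<longleftrightarrow> on_curve E P \<and> P \<noteq> Inf \<and> pt_add E P (pt_add E P P) = Inf"

text \<open>Q-isomorphism: related by an admissible change of variables
  x = u^2 x' + r, y = u^3 y' + s u^2 x' + t with u \<noteq> 0 (Silverman Table III.3.1).\<close>
definition iso_Q :: "wcurve \<Rightarrow> wcurve \<Rightarrow> bool" where
  "iso_Q E E' \<longleftrightarrow> (\<exists>u r s t :: rat. u \<noteq> 0 \<and>
      u * wa1 E' = wa1 E + 2 * s \<and>
      u ^ 2 * wa2 E' = wa2 E - s * wa1 E + 3 * r - s ^ 2 \<and>
      u ^ 3 * wa3 E' = wa3 E + r * wa1 E + 2 * t \<and>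
      u ^ 4 * wa4 E' = wa4 E - s * wa3 E + 2 * r * wa2 E - (t + r * s) * wa1 E
                        + 3 * r ^ 2 - 2 * s * t \<and>
      u ^ 6 * wa6 E' = wa6 E + r * wa4 E + r ^ 2 * wa2 E + r ^ 3 - t * wa3 E
                        - t ^ 2 - r * t * wa1 E)"

text \<open>Velu's model of the quotient E/<P> for a point P of order 3
  (subgroup {O, P, -P}, one representative of {P,-P}).\<close>
fun velu3 :: "wcurve \<Rightarrow> pt \<Rightarrow> wcurve" where
  "velu3 E Inf = E"
| "velu3 E (Aff xQ yQ) =
     (let gx = 3 * xQ ^ 2 + 2 * wa2 E * xQ + wa4 E - wa1 E * yQ;
          gy = - 2 * yQ - wa1 E * xQ - wa3 E;
          v = 2 * gx - wa1 E * gy;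
          w = gy ^ 2 + xQ * v
      in W (wa1 E) (wa2 E) (wa3 E) (wa4 E - 5 * v)
           (wa6 E - (wa1 E ^ 2 + 4 * wa2 E) * v - 7 * w))"

definition E_C3 :: "int \<Rightarrow> int \<Rightarrow> wcurve" where
  "E_C3 a b = W (of_int a) 0 (of_int (a ^ 2 * b)) 0 0"

definition Et_C3 :: "int \<Rightarrow> int \<Rightarrow> wcurve" where
  "Et_C3 a b = W (of_int a) 0 (of_int (a ^ 2 * b)) (of_int (- 5 * a ^ 3 * b))
                 (of_int (- (a ^ 4 * b * (a + 7 * b))))"

end

theory Submission
  imports Defs
begin

text \<open>A rational point of order 3 is an inflection point of the cubic; moving it to the origin with
  its tangent along the \<open>x\<close>-axis puts the curve in the form \<open>y\<^sup>2 + A\<^sub>1 x y + A\<^sub>3 y = x\<^sup>3\<close>, and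
  Velu's formulas then put the quotient in the matching form. Rescaling by \<open>A\<^sub>1/m\<close>, where \<open>A\<^sub>3/A\<^sub>1\<^sup>3 = n/m\<close> in lowest terms, gives \<open>E_C3 m n\<close>
  and \<open>Et_C3 m n\<close> (\<open>A\<^sub>1 \<noteq> 0\<close> because \<open>c\<^sub>4 = A\<^sub>1(A\<^sub>1\<^sup>3 - 24 A\<^sub>3)\<close> and \<open>j \<noteq> 0\<close>). A rational flex on
  \<open>Et_C3 m n\<close>, which the second point of order 3 provides, forces \<open>n/m\<close> to be a rational cube,
  and for coprime \<open>m > 0\<close> and \<open>n\<close> this means both are cubes.\<close>

lemma iso_Q_trans:
  assumes "iso_Q E1 E2" and "iso_Q E2 E3"
  shows "iso_Q E1 E3"
proof -
  obtain a1 a2 a3 a4 a6 where E1: "E1 = W a1 a2 a3 a4 a6" by (cases E1)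
  obtain b1 b2 b3 b4 b6 where E2: "E2 = W b1 b2 b3 b4 b6" by (cases E2)
  obtain c1 c2 c3 c4 c6 where E3: "E3 = W c1 c2 c3 c4 c6" by (cases E3)
  from assms(1) obtain u r s t where u: "u \<noteq> 0"
    and h1: "u * b1 = a1 + 2 * s"
    and h2: "u ^ 2 * b2 = a2 - s * a1 + 3 * r - s ^ 2"
    and h3: "u ^ 3 * b3 = a3 + r * a1 + 2 * t"
    and h4: "u ^ 4 * b4 = a4 - s * a3 + 2 * r * a2 - (t + r * s) * a1 + 3 * r ^ 2 - 2 * s * t"
    and h6: "u ^ 6 * b6 = a6 + r * a4 + r ^ 2 * a2 + r ^ 3 - t * a3 - t ^ 2 - r * t * a1"
    unfolding iso_Q_def E1 E2 by auto
  from assms(2) obtain v r' s' t' where v: "v \<noteq> 0"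
    and k1: "v * c1 = b1 + 2 * s'"
    and k2: "v ^ 2 * c2 = b2 - s' * b1 + 3 * r' - s' ^ 2"
    and k3: "v ^ 3 * c3 = b3 + r' * b1 + 2 * t'"
    and k4: "v ^ 4 * c4 = b4 - s' * b3 + 2 * r' * b2 - (t' + r' * s') * b1 + 3 * r' ^ 2 - 2 * s' * t'"
    and k6: "v ^ 6 * c6 = b6 + r' * b4 + r' ^ 2 * b2 + r' ^ 3 - t' * b3 - t' ^ 2 - r' * t' * b1"
    unfolding iso_Q_def E2 E3 by auto
  show ?thesis
    unfolding iso_Q_def E1 E3 wa1.simps wa2.simps wa3.simps wa4.simps wa6.simps
  proof (intro exI conjI)
    show "u * v \<noteq> 0" using u v by simp
    show "u * v * c1 = a1 + 2 * (s + u * s')" using h1 k1 by algebra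
    show "(u * v) ^ 2 * c2 = a2 - (s + u * s') * a1 + 3 * (r + u^2 * r') - (s + u * s') ^ 2"
      using h1 h2 k2 by algebra
    show "(u * v) ^ 3 * c3 = a3 + (r + u^2 * r') * a1 + 2 * (t + u^3 * t' + s * u^2 * r')"
      using h1 h3 k3 by algebra
    show "(u * v) ^ 4 * c4 = a4 - (s + u * s') * a3 + 2 * (r + u^2 * r') * a2
        - ((t + u^3 * t' + s * u^2 * r') + (r + u^2 * r') * (s + u * s')) * a1
        + 3 * (r + u^2 * r') ^ 2 - 2 * (s + u * s') * (t + u^3 * t' + s * u^2 * r')"
      using h1 h2 h3 h4 k4 by algebra
    show "(u * v) ^ 6 * c6 = a6 + (r + u^2 * r') * a4 + (r + u^2 * r') ^ 2 * a2 + (r + u^2 * r') ^ 3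
        - (t + u^3 * t' + s * u^2 * r') * a3 - (t + u^3 * t' + s * u^2 * r') ^ 2
        - (r + u^2 * r') * (t + u^3 * t' + s * u^2 * r') * a1"
      using h1 h2 h3 h4 h6 k6 by algebra
  qed
qed

text \<open>\<open>flex E x y l\<close>: the substitution \<open>x \<mapsto> x + X, y \<mapsto> y + l X + Y\<close> kills \<open>a\<^sub>2, a\<^sub>4, a\<^sub>6\<close>, i.e.
  \<open>(x, y)\<close> lies on \<open>E\<close> and its tangent line, of slope \<open>l\<close>, meets \<open>E\<close> there with multiplicity 3.\<close>

definition flex :: "wcurve \<Rightarrow> rat \<Rightarrow> rat \<Rightarrow> rat \<Rightarrow> bool" where
  "flex E x y l \<longleftrightarrow> wa2 E - l * wa1 E + 3 * x - l^2 = 0 \<and>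
     wa4 E - l * wa3 E + 2 * x * wa2 E - (y + x * l) * wa1 E + 3 * x^2 - 2 * l * y = 0 \<and>
     y ^ 2 + wa1 E * x * y + wa3 E * y = x ^ 3 + wa2 E * x ^ 2 + wa4 E * x + wa6 E"

lemma iso_Q_flex:
  assumes "iso_Q E E'" and "flex E x y l"
  obtains x' y' l' where "flex E' x' y' l'"
proof -
  obtain a1 a2 a3 a4 a6 where E: "E = W a1 a2 a3 a4 a6" by (cases E)
  obtain b1 b2 b3 b4 b6 where E': "E' = W b1 b2 b3 b4 b6" by (cases E')
  from assms(1) obtain u r s t where u: "u \<noteq> 0"
    and h1: "u * b1 = a1 + 2 * s"
    and h2: "u ^ 2 * b2 = a2 - s * a1 + 3 * r - s ^ 2"
    and h3: "u ^ 3 * b3 = a3 + r * a1 + 2 * t"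
    and h4: "u ^ 4 * b4 = a4 - s * a3 + 2 * r * a2 - (t + r * s) * a1 + 3 * r ^ 2 - 2 * s * t"
    and h6: "u ^ 6 * b6 = a6 + r * a4 + r ^ 2 * a2 + r ^ 3 - t * a3 - t ^ 2 - r * t * a1"
    unfolding iso_Q_def E E' by auto
  define x' where "x' = (x - r) / u^2"
  define y' where "y' = (y - t - s * (x - r)) / u^3"
  define l' where "l' = (l - s) / u"
  have x: "x = r + u^2 * x'" and y: "y = t + u^3 * y' + s * u^2 * x'" and l: "l = s + u * l'"
    using u by (simp_all add: x'_def y'_def l'_def)
  from assms(2) have
        e1: "a2 - l * a1 + 3 * x - l^2 = 0"
    and e2: "a4 - l * a3 + 2 * x * a2 - (y + x * l) * a1 + 3 * x^2 - 2 * l * y = 0"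
    and e3: "y ^ 2 + a1 * x * y + a3 * y = x ^ 3 + a2 * x ^ 2 + a4 * x + a6"
    by (simp_all add: flex_def E)
  have "u^2 * (b2 - l' * b1 + 3 * x' - l'^2) = 0"
    using h1 h2 e1 unfolding x l by algebra
  moreover have "u^4 * (b4 - l' * b3 + 2 * x' * b2 - (y' + x' * l') * b1 + 3 * x'^2 - 2 * l' * y') = 0"
    using h1 h2 h3 h4 e2 unfolding x y l by algebra
  moreover have "u^6 * (y' ^ 2 + b1 * x' * y' + b3 * y' - (x' ^ 3 + b2 * x' ^ 2 + b4 * x' + b6)) = 0"
    using h1 h2 h3 h4 h6 e3 unfolding x y l by algebra
  ultimately have "flex E' x' y' l'" using u by (simp add: flex_def E')
  then show thesis by (rule that)
qed

lemma order3_imp_flex: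
  assumes "order3 E P"
  obtains x y l where "P = Aff x y" and "flex E x y l"
proof -
  from assms obtain x y where P: "P = Aff x y" and on: "on_curve E (Aff x y)"
    and triple: "pt_add E (Aff x y) (pt_add E (Aff x y) (Aff x y)) = Inf"
    unfolding order3_def by (cases P) auto
  define D where "D = 2 * y + wa1 E * x + wa3 E"
  have D: "D \<noteq> 0"
  proof
    assume "D = 0"
    then have "pt_add E (Aff x y) (Aff x y) = Inf" by (simp add: D_def)
    with triple show False by simp
  qed
  define l where "l = (3 * x ^ 2 + 2 * wa2 E * x + wa4 E - wa1 E * y) / D"
  define x2 where "x2 = l ^ 2 + wa1 E * l - wa2 E - x - x"
  obtain y2 where double: "pt_add E (Aff x y) (Aff x y) = Aff x2 y2"
    using D by (simp add: D_def l_def x2_def Let_def)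
  have "x2 = x"
  proof (rule ccontr)
    assume "x2 \<noteq> x"
    then have "pt_add E (Aff x y) (Aff x2 y2) \<noteq> Inf" by (simp add: Let_def)
    with triple double show False by simp
  qed
  then have e1: "wa2 E - l * wa1 E + 3 * x - l^2 = 0" by (simp add: x2_def algebra_simps)
  have "l * D = 3 * x ^ 2 + 2 * wa2 E * x + wa4 E - wa1 E * y" using D by (simp add: l_def)
  then have e2: "wa4 E - l * wa3 E + 2 * x * wa2 E - (y + x * l) * wa1 E + 3 * x^2 - 2 * l * y = 0"
    by (simp add: D_def algebra_simps)
  show thesis using that P e1 e2 on by (simp add: flex_def)
qed

definition C3_curve :: "rat \<Rightarrow> rat \<Rightarrow> wcurve" where
  "C3_curve A1 A3 = W A1 0 A3 0 0"

definition C3_quotient :: "rat \<Rightarrow> rat \<Rightarrow> wcurve" where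
  "C3_quotient A1 A3 = W A1 0 A3 (- 5 * A1 * A3) (- (A1 ^ 3 * A3) - 7 * A3 ^ 2)"

lemma E_C3_eq_C3_curve: "E_C3 a b = C3_curve (of_int a) (of_int a ^ 2 * of_int b)"
  by (simp add: E_C3_def C3_curve_def)

lemma Et_C3_eq_C3_quotient: "Et_C3 a b = C3_quotient (of_int a) (of_int a ^ 2 * of_int b)"
  by (simp add: Et_C3_def C3_quotient_def algebra_simps power_numeral_reduce)

lemma iso_Q_C3_curve_scale:
  assumes "u \<noteq> 0"
  shows "iso_Q (C3_curve (u * A1) (u ^ 3 * A3)) (C3_curve A1 A3)"
  unfolding iso_Q_def C3_curve_def
  by (rule exI[of _ u], rule exI[of _ 0], rule exI[of _ 0], rule exI[of _ 0]) (simp add: assms)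

lemma iso_Q_C3_quotient_scale:
  assumes "u \<noteq> 0"
  shows "iso_Q (C3_quotient (u * A1) (u ^ 3 * A3)) (C3_quotient A1 A3)"
  unfolding iso_Q_def C3_quotient_def
  by (rule exI[of _ u], rule exI[of _ 0], rule exI[of _ 0], rule exI[of _ 0])
    (simp add: assms; algebra)

lemma flex_iso_Q_C3_curve:
  assumes "flex E x y l"
  shows "iso_Q E (C3_curve (wa1 E + 2 * l) (wa3 E + x * wa1 E + 2 * y))"
  unfolding iso_Q_def C3_curve_def
  by (rule exI[of _ 1], rule exI[of _ x], rule exI[of _ l], rule exI[of _ y])
    (use assms in \<open>simp add: flex_def algebra_simps\<close>)

lemma flex_velu3_iso_Q_C3_quotient:
  assumes "flex E x y l"
  shows "iso_Q (velu3 E (Aff x y)) (C3_quotient (wa1 E + 2 * l) (wa3 E + x * wa1 E + 2 * y))"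
proof -
  obtain a1 a2 a3 a4 a6 where E: "E = W a1 a2 a3 a4 a6" by (cases E)
  from assms have
        e1: "a2 - l * a1 + 3 * x - l^2 = 0"
    and e2: "a4 - l * a3 + 2 * x * a2 - (y + x * l) * a1 + 3 * x^2 - 2 * l * y = 0"
    and e3: "y ^ 2 + a1 * x * y + a3 * y = x ^ 3 + a2 * x ^ 2 + a4 * x + a6"
    by (simp_all add: flex_def E)
  define v where "v = 2 * (3 * x ^ 2 + 2 * a2 * x + a4 - a1 * y) - a1 * (- 2 * y - a1 * x - a3)"
  define w where "w = (- 2 * y - a1 * x - a3) ^ 2 + x * v"
  have V: "velu3 E (Aff x y) = W a1 a2 a3 (a4 - 5 * v) (a6 - (a1 ^ 2 + 4 * a2) * v - 7 * w)"
    by (simp add: E v_def w_def Let_def)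
  define A1 where "A1 = a1 + 2 * l"
  define A3 where "A3 = a3 + x * a1 + 2 * y"
  have a4: "- 5 * A1 * A3 = a4 - 5 * v - l * a3 + 2 * x * a2 - (y + x * l) * a1
      + 3 * x ^ 2 - 2 * l * y"
    using e1 e2 unfolding A1_def A3_def v_def by algebra
  have a6: "- (A1 ^ 3 * A3) - 7 * A3 ^ 2 = a6 - (a1 ^ 2 + 4 * a2) * v - 7 * w
      + x * (a4 - 5 * v) + x ^ 2 * a2 + x ^ 3 - y * a3 - y ^ 2 - x * y * a1"
    using e1 e2 e3 unfolding A1_def A3_def v_def w_def by algebra
  have "iso_Q (velu3 E (Aff x y)) (C3_quotient A1 A3)"
    unfolding iso_Q_def V C3_quotient_def
    by (rule exI[of _ 1], rule exI[of _ x], rule exI[of _ l], rule exI[of _ y])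
      (use e1 a4 a6 in \<open>simp add: A1_def A3_def\<close>)
  then show ?thesis by (simp add: E A1_def A3_def)
qed

lemma flex_wc4:
  assumes "flex E x y l"
  defines "A1 \<equiv> wa1 E + 2 * l" and "A3 \<equiv> wa3 E + x * wa1 E + 2 * y"
  shows "wc4 E = A1 * (A1 ^ 3 - 24 * A3)"
  using assms unfolding flex_def wc4_def wb2_def wb4_def A1_def A3_def by algebra

lemma coprime_int_cube_ratio_imp_cubes:
  fixes m n :: int and r :: rat
  assumes m: "m > 0" and cop: "coprime m n" and ratio: "of_int n = of_int m * r ^ 3"
  shows "(\<exists>c. m = c ^ 3) \<and> (\<exists>d. n = d ^ 3)"
proof -
  obtain p s where r: "r = Fract p s" and s: "s > 0" and ps: "coprime p s" by (cases r)
  have "rat_of_int (n * s ^ 3) = rat_of_int (m * p ^ 3)"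
    using ratio s by (simp add: r Fract_of_int_quotient power_divide field_simps)
  then have eq: "n * s ^ 3 = m * p ^ 3" by (simp only: of_int_eq_iff)
  have "coprime (s ^ 3) (p ^ 3)" using ps by (simp add: coprime_commute)
  then have "s ^ 3 dvd m" using eq coprime_dvd_mult_left_iff by (metis dvd_triv_right)
  moreover have "m dvd s ^ 3" using eq cop coprime_dvd_mult_right_iff by (metis dvd_triv_left)
  ultimately have ms: "m = s ^ 3" using m s by (simp add: zdvd_antisym_nonneg)
  then have "n = p ^ 3" using eq s by simp
  with ms show ?thesis by blast
qed

lemma flex_C3_quotient_imp_cube:
  fixes M N :: rat
  assumes M: "M \<noteq> 0" and "flex (C3_quotient M (M ^ 2 * N)) x y l"
  shows "\<exists>r. N = M * r ^ 3"
proof -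
  have e1: "0 - l * M + 3 * x - l^2 = 0"
    and e2: "- 5 * M * (M ^ 2 * N) - l * (M ^ 2 * N) + 2 * x * 0 - (y + x * l) * M + 3 * x^2
             - 2 * l * y = 0"
    and e3: "y ^ 2 + M * x * y + M ^ 2 * N * y = x ^ 3 + 0 * x ^ 2 + - 5 * M * (M ^ 2 * N) * x
             + (- (M ^ 3 * (M ^ 2 * N)) - 7 * (M ^ 2 * N) ^ 2)"
    using assms(2)
    unfolding flex_def C3_quotient_def wa1.simps wa2.simps wa3.simps wa4.simps wa6.simps
    by blast+
  txt \<open>Eliminating \<open>y\<close> and \<open>l\<close> leaves \<open>q \<cdot> F(x) = 0\<close> with \<open>q > 0\<close>, and the root \<open>x\<close> of \<open>F\<close>
    exhibits \<open>N/M\<close> as a cube through the identity below.\<close>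
  define q where "q = l^2 + l * M + M^2"
  have "q = (l + M / 2)^2 + 3 / 4 * M^2" by (simp add: q_def power2_eq_square field_simps)
  moreover have "M^2 > 0" using M by simp
  ultimately have q: "q > 0"
    by (metis add_nonneg_pos zero_le_power2 mult_pos_pos zero_less_divide_iff zero_less_numeral)
  define F where "F = x^3 - 9 * M^3 * N * x - 27 * M^4 * N^2 - M^5 * N"
  have "q * F = 0" unfolding q_def F_def using e1 e2 e3 by algebra
  then have F: "F = 0" using q by simp
  have "q = 3 * x + M^2" using e1 by (simp add: q_def algebra_simps)
  then have "N * q^3 - M * (9 * M * N + x)^3 = F * (27 * N - M)"
    unfolding F_def by algebra
  then have "N * q^3 = M * (9 * M * N + x)^3" using F by simp
  then have "N = M * ((9 * M * N + x) / q)^3" using q by (simp add: power_divide field_simps)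
  then show ?thesis by blast
qed

lemma flex_imp_C3_models:
  assumes flex: "flex E x y l" and j: "j_inv E \<noteq> 0"
  obtains m n :: int where "m > 0" and "coprime m n"
    and "iso_Q E (E_C3 m n)" and "iso_Q (velu3 E (Aff x y)) (Et_C3 m n)"
proof -
  define A1 where "A1 = wa1 E + 2 * l"
  define A3 where "A3 = wa3 E + x * wa1 E + 2 * y"
  have "A1 \<noteq> 0"
  proof
    assume "A1 = 0"
    then have "wc4 E = 0" using flex_wc4[OF flex] by (simp add: A1_def)
    with j show False by (simp add: j_inv_def)
  qed
  obtain n m where q: "A3 / A1 ^ 3 = Fract n m" and m: "m > 0" and "coprime n m"
    by (cases "A3 / A1 ^ 3")
  define u where "u = A1 / of_int m"
  have u: "u \<noteq> 0" using \<open>A1 \<noteq> 0\<close> m by (simp add: u_def)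
  have A1: "A1 = u * of_int m" using m by (simp add: u_def)
  have A3: "A3 = u ^ 3 * (of_int m ^ 2 * of_int n)"
    using q \<open>A1 \<noteq> 0\<close> m
    by (simp add: u_def Fract_of_int_quotient field_simps power3_eq_cube power2_eq_square)
  have "iso_Q E (C3_curve (u * of_int m) (u ^ 3 * (of_int m ^ 2 * of_int n)))"
    using flex_iso_Q_C3_curve[OF flex] by (simp flip: A1 A3 add: A1_def A3_def)
  then have "iso_Q E (E_C3 m n)"
    unfolding E_C3_eq_C3_curve using iso_Q_C3_curve_scale[OF u] by (rule iso_Q_trans)
  have "iso_Q (velu3 E (Aff x y)) (C3_quotient (u * of_int m) (u ^ 3 * (of_int m ^ 2 * of_int n)))"
    using flex_velu3_iso_Q_C3_quotient[OF flex] by (simp flip: A1 A3 add: A1_def A3_def)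
  then have "iso_Q (velu3 E (Aff x y)) (Et_C3 m n)"
    unfolding Et_C3_eq_C3_quotient using iso_Q_C3_quotient_scale[OF u] by (rule iso_Q_trans)
  with \<open>iso_Q E (E_C3 m n)\<close> show thesis
    using that m \<open>coprime n m\<close> by (simp add: coprime_commute)
qed

theorem proposition4p4:
  fixes E :: wcurve and P :: pt
  assumes "elliptic E"
    and "j_inv E \<noteq> 0"
    and "order3 E P"
    and "\<exists>Q. order3 (velu3 E P) Q"
  shows "\<exists>a b :: int. coprime a b \<and> a > 0 \<and>
           (\<exists>c :: int. a = c ^ 3) \<and> (\<exists>d :: int. b = d ^ 3) \<and>
           iso_Q E (E_C3 a b) \<and> iso_Q (velu3 E P) (Et_C3 a b)"
proof -
  obtain x y l where "P = Aff x y" and "flex E x y l"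
    using assms(3) by (rule order3_imp_flex)
  then obtain m n where m: "m > 0" and cop: "coprime m n"
    and iso: "iso_Q E (E_C3 m n)" and iso': "iso_Q (velu3 E P) (Et_C3 m n)"
    using assms(2) by (metis flex_imp_C3_models)
  obtain Q where "order3 (velu3 E P) Q" using assms(4) by blast
  then obtain xq yq lq where "flex (velu3 E P) xq yq lq" by (rule order3_imp_flex)
  then obtain x' y' l' where "flex (Et_C3 m n) x' y' l'" using iso' by (metis iso_Q_flex)
  then have "\<exists>r. rat_of_int n = of_int m * r ^ 3"
    using m by (intro flex_C3_quotient_imp_cube) (simp_all add: Et_C3_eq_C3_quotient)
  then obtain r where "rat_of_int n = of_int m * r ^ 3" ..
  then have "(\<exists>c. m = c ^ 3) \<and> (\<exists>d. n = d ^ 3)"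
    by (rule coprime_int_cube_ratio_imp_cubes[OF m cop])
  then show ?thesis using m cop iso iso' by blast
qed

end
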